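(* Let $T(n) = (3n+1)/2^{v_2(3n+1)}$ for odd $n \ge 1$, and say an odd $n \equiv 1 \pmod 4$ produces $(L,G)=(1,1)$ if $T(n)\equiv 3 \pmod 4$ and $T(T(n)) \equiv 1 \pmod 4$. For $r \in \{0,\dots,63\}$ with $r \equiv 1 \pmod 4$, consider the integers $n = 64a + r$, $a \ge 0$. Then the set of such $r$ for which some $n = 64a+r$ produces $(L,G)=(1,1)$ is exactly $\{21,25,29,37,53,57\}$; for $r \in \{25,29,57\}$ every $n = 64a+r$ produces $(L,G)=(1,1)$ (unconditional), while for $r \in \{21,37,53\}$ this holds for some but not all $a$ (conditional). In particular the three conditional classes $21,37,53$ all satisfy $r \equiv 5 \pmod 8$.
   Context: $v_2$ is the $2$-adic valuation. $(L,G)=(1,1)$ means that, in the orbit of $n$ under $T$ with burst indicator $X_t = \mathbf{1}[n_t \equiv 1 \pmod 4]$, the burst run starting at $n$ has length $1$ and the following gap run has length $1$. *)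

theory Defs
  imports "HOL-Computational_Algebra.Primes"
begin

definition v2 :: "nat \<Rightarrow> nat" where
  "v2 m = multiplicity (2::nat) m"

definition T :: "nat \<Rightarrow> nat" where
  "T n = (3 * n + 1) div 2 ^ v2 (3 * n + 1)"

definition produces11 :: "nat \<Rightarrow> bool" where
  "produces11 n \<longleftrightarrow> odd n \<and> n mod 4 = 1 \<and> T n mod 4 = 3 \<and> T (T n) mod 4 = 1"

end

theory Submission
  imports Defs
begin

(* For n = 1 (mod 4) the pattern (L,G) = (1,1) only depends on T n modulo 8: an m = 3 (mod 4)
   has T m = (3m + 1)/2, which is 1 (mod 4) exactly when m = 3 (mod 8).  If 3r + 1 = 2^v q with
   q odd and v < k, then T maps 2^k a + r to 3 2^(k-v) a + q.  For r < 64 with v <= 3 this fixes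
   T n modulo 8, and for r = 5 (v = 4) it gives T n = 1 (mod 4).  In the classes 21, 37, 53
   (v = 6, 4, 5) the residue of T n modulo 8 depends on a, and small values of a exhibit both
   outcomes. *)

lemma v2_pow2_mult_odd: "odd q \<Longrightarrow> v2 (2 ^ j * q) = j"
  unfolding v2_def by (rule multiplicity_decomposeI) auto

lemma v2_numeral [simp]:
  "v2 1 = 0"
  "v2 (Suc 0) = 0"
  "v2 (numeral (Num.Bit0 k)) = Suc (v2 (numeral k))"
  "v2 (numeral (Num.Bit1 k)) = 0"
proof -
  show "v2 1 = 0" "v2 (Suc 0) = 0"
    using v2_pow2_mult_odd[of 1 0] by simp_all
  have "multiplicity (2::nat) (2 * numeral k) = Suc (multiplicity (2::nat) (numeral k))"
    by (rule multiplicity_times_same) auto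
  then show "v2 (numeral (Num.Bit0 k)) = Suc (v2 (numeral k))"
    by (metis v2_def numeral_Bit0 mult_2)
  show "v2 (numeral (Num.Bit1 k)) = 0"
    using v2_pow2_mult_odd[of "numeral (Num.Bit1 k)" 0] by simp
qed

lemma T_eqI: "3 * n + 1 = 2 ^ j * q \<Longrightarrow> odd q \<Longrightarrow> T n = q"
  unfolding T_def by (simp add: v2_pow2_mult_odd)

lemma T_decompose: "3 * n + 1 = 2 ^ v2 (3 * n + 1) * T n" "odd (T n)"
proof -
  obtain q where "3 * n + 1 = 2 ^ v2 (3 * n + 1) * q" "odd q"
    using multiplicity_decompose'[of "3 * n + 1" 2] unfolding v2_def by auto
  with T_eqI show "3 * n + 1 = 2 ^ v2 (3 * n + 1) * T n" "odd (T n)"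
    by metis+
qed

lemma T_pow2_mult_add:
  assumes "v2 (3 * r + 1) < k"
  shows "T (2 ^ k * a + r) = 3 * 2 ^ (k - v2 (3 * r + 1)) * a + T r"
proof (rule T_eqI)
  let ?j = "v2 (3 * r + 1)"
  have "2 ^ k = (2::nat) ^ ?j * 2 ^ (k - ?j)"
    using assms by (simp flip: power_add)
  then show "3 * (2 ^ k * a + r) + 1 = 2 ^ ?j * (3 * 2 ^ (k - ?j) * a + T r)"
    using T_decompose(1)[of r] by (simp add: algebra_simps)
  show "odd (3 * 2 ^ (k - ?j) * a + T r)"
    using assms T_decompose(2)[of r] by simp
qed

lemma T_mod4_eq_1_iff:
  assumes "m mod 4 = 3"
  shows "T m mod 4 = 1 \<longleftrightarrow> m mod 8 = 3"
proof -
  have "\<exists>b. m = 8 * b + 3 \<or> m = 8 * b + 7"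
    using assms by presburger
  then obtain b where "m = 8 * b + 3 \<or> m = 8 * b + 7" ..
  moreover have "T (8 * b + 3) = 12 * b + 5" "T (8 * b + 7) = 12 * b + 11"
    by (rule T_eqI[where j = 1]; simp)+
  ultimately show ?thesis
    by auto presburger+
qed

lemma produces11_iff: "produces11 n \<longleftrightarrow> n mod 4 = 1 \<and> T n mod 8 = 3"
proof -
  have "T n mod 8 = 3 \<Longrightarrow> T n mod 4 = 3" "n mod 4 = 1 \<Longrightarrow> odd n"
    by presburger+
  then show ?thesis
    unfolding produces11_def using T_mod4_eq_1_iff[of "T n"] by auto
qed

lemma produces11_mod64:
  assumes "r < 64" "r mod 4 = 1" "r \<notin> {21, 37, 53}"
  shows "produces11 (64 * a + r) \<longleftrightarrow> r \<in> {25, 29, 57}"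
proof -
  have r: "r \<in> {1, 5, 9, 13, 17, 25, 29, 33, 41, 45, 49, 57, 61}"
    using assms by simp presburger
  then have "v2 (3 * r + 1) < 6"
    by (elim insertE emptyE) simp_all
  moreover have "(64 * a + r) mod 4 = 1"
    using assms(2) by presburger
  ultimately have "produces11 (64 * a + r) \<longleftrightarrow> (3 * 2 ^ (6 - v2 (3 * r + 1)) * a + T r) mod 8 = 3"
    using T_pow2_mult_add[where k = 6 and a = a] by (simp add: produces11_iff)
  also have "\<dots> \<longleftrightarrow> r \<in> {25, 29, 57}"
    using r by (elim insertE emptyE; simp add: T_def; presburger)
  finally show ?thesis .
qed

lemma produces11_mod64_conditional:
  assumes "r \<in> {21, 37, 53}"
  shows "(\<exists>a. produces11 (64 * a + r)) \<and> (\<exists>a. \<not> produces11 (64 * a + r))"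
proof -
  have "produces11 (64 * 6 + 21)" "produces11 (64 * 1 + 37)" "produces11 (64 * 1 + 53)"
    "\<not> produces11 (64 * 0 + 21)" "\<not> produces11 (64 * 0 + 37)" "\<not> produces11 (64 * 0 + 53)"
    by (simp_all add: produces11_iff T_def)
  with assms show ?thesis
    by blast
qed

theorem corollary5p2:
  shows "{r::nat. r < 64 \<and> r mod 4 = 1 \<and> (\<exists>a::nat. produces11 (64 * a + r))}
           = {21, 25, 29, 37, 53, 57}
    \<and> (\<forall>r \<in> {25, 29, 57::nat}. \<forall>a::nat. produces11 (64 * a + r))
    \<and> (\<forall>r \<in> {21, 37, 53::nat}. (\<exists>a::nat. produces11 (64 * a + r))
                                  \<and> (\<exists>a::nat. \<not> produces11 (64 * a + r)))
    \<and> (\<forall>r \<in> {21, 37, 53::nat}. r mod 8 = 5)"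
proof (intro conjI)
  have "r < 64 \<and> r mod 4 = 1 \<and> (\<exists>a. produces11 (64 * a + r)) \<longleftrightarrow> r \<in> {21, 25, 29, 37, 53, 57}"
    for r :: nat
  proof (cases "r \<in> {21, 37, 53}")
    case True
    then show ?thesis
      using produces11_mod64_conditional[OF True] by auto
  next
    case False
    then have "r < 64 \<and> r mod 4 = 1 \<and> (\<exists>a. produces11 (64 * a + r))
        \<longleftrightarrow> r < 64 \<and> r mod 4 = 1 \<and> r \<in> {25, 29, 57}"
      using produces11_mod64[OF _ _ False] by blast
    with False show ?thesis
      by auto
  qed
  then show "{r::nat. r < 64 \<and> r mod 4 = 1 \<and> (\<exists>a::nat. produces11 (64 * a + r))}
      = {21, 25, 29, 37, 53, 57}"
    by blast
  show "\<forall>r \<in> {25, 29, 57::nat}. \<forall>a::nat. produces11 (64 * a + r)"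
    using produces11_mod64 by auto
  show "\<forall>r \<in> {21, 37, 53::nat}. (\<exists>a::nat. produces11 (64 * a + r))
      \<and> (\<exists>a::nat. \<not> produces11 (64 * a + r))"
    using produces11_mod64_conditional by blast
  show "\<forall>r \<in> {21, 37, 53::nat}. r mod 8 = 5"
    by simp
qed

end
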